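(* Let $b,c,t$ be positive integers, $n=tb$, and let $\mathbf{H}^{*}_{qc}$ be a $cb\times tb$ binary matrix which is a $c\times t$ array of $b\times b$ circulant matrices over $\mathbb{F}_2$, of rank $r$ over $\mathbb{F}_2$. Let $\mathcal{C}\subseteq\mathbb{F}_2^n$ be the code with parity-check matrix $\mathbf{H}^{*}_{qc}$ and $\Lambda=\mathcal{C}+2\mathbb{Z}^n=\{\mathbf{x}\in\mathbb{Z}^n:\mathbf{x}\bmod 2\in\mathcal{C}\}$. Suppose $l$ with $c\le l\le t$ is the least number of columns of circulants of $\mathbf{H}^{*}_{qc}$ forming a submatrix of rank $r$, and that the last $l$ columns of circulants of $\mathbf{H}^{*}_{qc}$ form such a $cb\times lb$ submatrix $\mathbf{D}^{*}$. Suppose $d_1,\dots,d_l\in\{0,\dots,b\}$, with $\bar d_j=b-d_j$, are such that the columns of $\mathbf{D}^{*}$ consisting, for each $j=1,\dots,l$, of the last $\bar d_j$ columns of the $j$-th column block (of width $b$) of $\mathbf{D}^{*}$ are linearly independent over $\mathbb{F}_2$ and number exactly $r$ (so $\sum_j\bar d_j=r$ and $\sum_j d_j=lb-r$). For each $i$ with $d_i\ge1$, let $\mathbf{w}_i=(\mathbf{w}_i^{(1)},\dots,\mathbf{w}_i^{(l)})\in\mathbb{F}_2^{lb}$, $\mathbf{w}_i^{(j)}\in\mathbb{F}_2^b$, be the vector with $\mathbf{D}^{*}\mathbf{w}_i^t=\mathbf{0}$ over $\mathbb{F}_2$ such that the first $d_j$ entries of $\mathbf{w}_i^{(j)}$ are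 $(1,0,\dots,0)$ if $j=i$ and all $0$ if $j\ne i$. Let $\sigma$ denote the cyclic right shift by one position on $\mathbb{F}_2^b$. Let $\mathbf{Q}$ be the $(lb-r)\times tb$ binary matrix whose rows are, for each $i=1,\dots,l$ and $s=0,\dots,d_i-1$, the vectors $(\mathbf{0}_{(t-l)b},\sigma^s(\mathbf{w}_i^{(1)}),\dots,\sigma^s(\mathbf{w}_i^{(l)}))$. Let $\mathbf{G}$ be a $(t-l)b\times tb$ binary matrix of the form $[\mathbf{I}_{(t-l)b}\ |\ \mathbf{G}']$ with $\mathbf{G}'$ a $(t-l)\times l$ array of $b\times b$ circulants, and assume that $\mathbf{G}^{*}_{qc}=\begin{bmatrix}\mathbf{G}\\ \mathbf{Q}\end{bmatrix}$ is a generator matrix of $\mathcal{C}$ (its $tb-r$ rows form a basis of $\mathcal{C}$). Let $\mathbf{R}$ be the $r\times tb$ integer matrix $[\mathbf{0}_{r\times(t-l)b}\ |\ \mathbf{B}]$ where $\mathbf{B}$ is block diagonal with $l$ diagonal blocks, the $j$-th being the $\bar d_j\times b$ matrix $[\mathbf{0}_{\bar d_j\times d_j}\ \ 2\mathbf{I}_{\bar d_j}]$. Then the $n\times n$ integer matrix $$\mathbf{G}_{\Lambda}=\begin{bmatrix}\mathbf{G}^{*}_{qc}\\ \mathbf{R}\end{bmatrix}$$ (entries of $\mathbf{G}^{*}_{qc}$ regarded as integers $0,1$) is a generator matrix of $\Lambda$, i.e., its rows form a $\mathbb{Z}$-basis of $\Lambda$.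
   Context: Codewords of a binary code are embedded in $\mathbb{Z}^n$ with entries $0,1$. $\Lambda=\mathcal{C}+2\mathbb{Z}^n$ is the Construction A lattice of $\mathcal{C}$ (a QC-LDPC lattice when $\mathcal{C}$ is a quasi-cyclic LDPC code). A generator matrix of a full-rank lattice is a square matrix whose rows form a $\mathbb{Z}$-basis of the lattice. *)

theory Defs
  imports Main
begin

text \<open>Vectors in Z^n / F_2^n are functions nat => int, zero at indices >= n;
binary vectors take values in {0,1}; F_2 arithmetic is int arithmetic mod 2.
Matrices are functions nat => nat => int with explicitly given dimensions.
All indices (rows, columns, blocks, i, j, s) are 0-based.\<close>

definition zvec :: "nat \<Rightarrow> (nat \<Rightarrow> int) set" where
  "zvec n = {x. \<forall>i\<ge>n. x i = 0}"

definition bvec :: "nat \<Rightarrow> (nat \<Rightarrow> int) set" where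
  "bvec n = {x. x \<in> zvec n \<and> (\<forall>i<n. x i \<in> {0,1})}"

definition f2_indep_cols :: "(nat \<Rightarrow> nat \<Rightarrow> int) \<Rightarrow> nat \<Rightarrow> nat set \<Rightarrow> bool" where
  "f2_indep_cols H m K \<longleftrightarrow> finite K \<and>
     (\<forall>T\<subseteq>K. T \<noteq> {} \<longrightarrow> (\<exists>i<m. (\<Sum>j\<in>T. H i j) mod 2 \<noteq> 0))"

definition f2_rank_cols :: "(nat \<Rightarrow> nat \<Rightarrow> int) \<Rightarrow> nat \<Rightarrow> nat set \<Rightarrow> nat" where
  "f2_rank_cols H m J = Max (card ` {K. K \<subseteq> J \<and> f2_indep_cols H m K})"

definition block_cols :: "nat \<Rightarrow> nat set \<Rightarrow> nat set" where
  "block_cols b S = {q * b + k | q k. q \<in> S \<and> k < b}"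

definition block_circulant :: "(nat \<Rightarrow> nat \<Rightarrow> int) \<Rightarrow> nat \<Rightarrow> nat \<Rightarrow> nat \<Rightarrow> nat \<Rightarrow> nat \<Rightarrow> bool" where
  "block_circulant M b r0 c0 p q \<longleftrightarrow>
     (\<forall>u<p. \<forall>v<q. \<forall>i<b. \<forall>j<b.
        M (r0 + u * b + i) (c0 + v * b + j) =
        M (r0 + u * b + (i + 1) mod b) (c0 + v * b + (j + 1) mod b))"

definition pc_code :: "(nat \<Rightarrow> nat \<Rightarrow> int) \<Rightarrow> nat \<Rightarrow> nat \<Rightarrow> (nat \<Rightarrow> int) set" where
  "pc_code H m n = {x \<in> bvec n. \<forall>i<m. (\<Sum>j<n. H i j * x j) mod 2 = 0}"

definition constrA :: "(nat \<Rightarrow> int) set \<Rightarrow> nat \<Rightarrow> (nat \<Rightarrow> int) set" where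
  "constrA C n = {x \<in> zvec n. (\<lambda>i. x i mod 2) \<in> C}"

definition f2_basis :: "(nat \<Rightarrow> int) list \<Rightarrow> (nat \<Rightarrow> int) set \<Rightarrow> bool" where
  "f2_basis vs C \<longleftrightarrow>
     (\<forall>x. x \<in> C \<longleftrightarrow> (\<exists>T\<subseteq>{..<length vs}. x = (\<lambda>j. (\<Sum>k\<in>T. (vs ! k) j) mod 2))) \<and>
     (\<forall>T\<subseteq>{..<length vs}. T \<noteq> {} \<longrightarrow> (\<lambda>j. (\<Sum>k\<in>T. (vs ! k) j) mod 2) \<noteq> (\<lambda>_. 0))"

definition z_basis :: "(nat \<Rightarrow> int) list \<Rightarrow> (nat \<Rightarrow> int) set \<Rightarrow> bool" where
  "z_basis vs L \<longleftrightarrow>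
     (\<forall>x. x \<in> L \<longleftrightarrow> (\<exists>a::nat \<Rightarrow> int. x = (\<lambda>j. \<Sum>k<length vs. a k * (vs ! k) j))) \<and>
     (\<forall>a::nat \<Rightarrow> int. (\<lambda>j. \<Sum>k<length vs. a k * (vs ! k) j) = (\<lambda>_. 0) \<longrightarrow> (\<forall>k<length vs. a k = 0))"

definition mat_row :: "(nat \<Rightarrow> nat \<Rightarrow> int) \<Rightarrow> nat \<Rightarrow> nat \<Rightarrow> nat \<Rightarrow> int" where
  "mat_row M n i = (\<lambda>j. if j < n then M i j else 0)"

definition G_rows :: "(nat \<Rightarrow> nat \<Rightarrow> int) \<Rightarrow> nat \<Rightarrow> nat \<Rightarrow> nat \<Rightarrow> (nat \<Rightarrow> int) list" where
  "G_rows G t b l = map (mat_row G (t * b)) [0..<(t - l) * b]"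

text \<open>Row (i,s) of Q: (0_{(t-l)b}, sigma^s(w_i^(1)), ..., sigma^s(w_i^(l))), where sigma is the
  cyclic right shift, so sigma^s(v)_k = v_{(k - s) mod b}; w i is indexed by j*b + k.\<close>
definition Q_row :: "(nat \<Rightarrow> nat \<Rightarrow> int) \<Rightarrow> nat \<Rightarrow> nat \<Rightarrow> nat \<Rightarrow> nat \<Rightarrow> nat \<Rightarrow> nat \<Rightarrow> int" where
  "Q_row w t b l i s = (\<lambda>col.
     if (t - l) * b \<le> col \<and> col < t * b then
       (let p = col - (t - l) * b; j = p div b; k = p mod b
        in w i (j * b + (k + b - s mod b) mod b))
     else 0)"

definition Q_rows :: "(nat \<Rightarrow> nat \<Rightarrow> int) \<Rightarrow> nat \<Rightarrow> nat \<Rightarrow> nat \<Rightarrow> (nat \<Rightarrow> nat) \<Rightarrow> (nat \<Rightarrow> int) list" where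
  "Q_rows w t b l d = concat (map (\<lambda>i. map (\<lambda>s. Q_row w t b l i s) [0..<d i]) [0..<l])"

text \<open>Row (j,q) of R = [0 | B], B block diagonal with j-th block [0_{dbar_j x d_j}  2 I_{dbar_j}].\<close>
definition R_row :: "nat \<Rightarrow> nat \<Rightarrow> nat \<Rightarrow> (nat \<Rightarrow> nat) \<Rightarrow> nat \<Rightarrow> nat \<Rightarrow> nat \<Rightarrow> int" where
  "R_row t b l d j q = (\<lambda>col.
     if col = (t - l) * b + j * b + d j + q then 2 else 0)"

definition R_rows :: "nat \<Rightarrow> nat \<Rightarrow> nat \<Rightarrow> (nat \<Rightarrow> nat) \<Rightarrow> (nat \<Rightarrow> int) list" where
  "R_rows t b l d = concat (map (\<lambda>j. map (\<lambda>q. R_row t b l d j q) [0..<b - d j]) [0..<l])"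

end

theory Submission imports Defs begin

text \<open>Let \<open>W\<close> be the rows of \<open>G\<^sup>*\<^sub>q\<^sub>c\<close> followed by the rows \<open>2 e\<^sub>p\<close> of \<open>R\<close>, where \<open>p\<close> runs
  over the set \<open>P\<close> of the \<open>r\<close> independent columns of \<open>D\<^sup>*\<close>. The rows of \<open>R\<close> vanish modulo 2,
  so every integer combination of \<open>W\<close> lies in \<open>\<Lambda>\<close>; conversely a vector of \<open>\<Lambda>\<close> differs from a
  0/1-combination of the rows of \<open>G\<^sup>*\<^sub>q\<^sub>c\<close> by an even vector, so \<open>W\<close> spans \<open>\<Lambda>\<close> once every
  \<open>2 e\<^sub>q\<close> is in its span. That follows by pivoting: for \<open>q \<in> P\<close> it is a row of \<open>R\<close>, for the
  other columns of the last \<open>l\<close> blocks a shifted row of \<open>Q\<close> has a pivot \<open>1\<close> at \<open>q\<close>, and for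
  the first \<open>(t - l) b\<close> columns the identity part of \<open>G\<close> does.
  Independence over \<open>\<int>\<close> is a 2-adic descent: a relation reduced modulo 2 gives a codeword
  supported on \<open>P\<close>, which is zero because the columns of \<open>H\<^sup>*\<^sub>q\<^sub>c\<close> indexed by \<open>P\<close> are
  independent, and then the \<open>\<bbbF>\<^sub>2\<close>-independence of \<open>G\<^sup>*\<^sub>q\<^sub>c\<close> makes every coefficient even.\<close>

section \<open>Integer spans of lists of vectors\<close>

definition lin_comb :: "(nat \<Rightarrow> int) \<Rightarrow> (nat \<Rightarrow> int) list \<Rightarrow> nat \<Rightarrow> int" where
  "lin_comb a vs = (\<lambda>j. \<Sum>k<length vs. a k * (vs ! k) j)"

definition int_span :: "(nat \<Rightarrow> int) list \<Rightarrow> (nat \<Rightarrow> int) set" where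
  "int_span vs = range (\<lambda>a. lin_comb a vs)"

definition int_independent :: "(nat \<Rightarrow> int) list \<Rightarrow> bool" where
  "int_independent vs \<longleftrightarrow> (\<forall>a. lin_comb a vs = (\<lambda>_. 0) \<longrightarrow> (\<forall>k<length vs. a k = 0))"

definition unit_vec :: "nat \<Rightarrow> nat \<Rightarrow> int" where
  "unit_vec q = (\<lambda>j. if j = q then 1 else 0)"

definition double_unit :: "nat \<Rightarrow> nat \<Rightarrow> int" where
  "double_unit q = (\<lambda>j. if j = q then 2 else 0)"

lemma z_basis_iff: "z_basis vs L \<longleftrightarrow> L = int_span vs \<and> int_independent vs"
  unfolding z_basis_def int_span_def int_independent_def lin_comb_def by blast

lemma sum_lessThan_add_split:
  "(\<Sum>k<m + n. f k) = (\<Sum>k<m. f k) + (\<Sum>k<n. f (m + k :: nat))"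
  by (induction n) (auto simp: add.assoc)

lemma lin_comb_append:
  "lin_comb a (xs @ ys) j = lin_comb a xs j + lin_comb (\<lambda>k. a (length xs + k)) ys j"
  by (simp add: lin_comb_def sum_lessThan_add_split nth_append)

lemma lin_comb_map_double_unit:
  "lin_comb a (map double_unit ps) j = 2 * lin_comb a (map unit_vec ps) j"
  unfolding lin_comb_def double_unit_def unit_vec_def sum_distrib_left by (auto intro!: sum.cong)

lemma lin_comb_map_unit_vec_outside:
  "j \<notin> set ps \<Longrightarrow> lin_comb a (map unit_vec ps) j = 0"
  by (auto simp: lin_comb_def unit_vec_def intro!: sum.neutral)

lemma lin_comb_map_unit_vec_nth:
  assumes "distinct ps" "k < length ps"
  shows "lin_comb a (map unit_vec ps) (ps ! k) = a k"
proof -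
  have "lin_comb a (map unit_vec ps) (ps ! k) = (\<Sum>i<length ps. if i = k then a i else 0)"
    unfolding lin_comb_def using assms by (intro sum.cong) (auto simp: unit_vec_def nth_eq_iff_index_eq)
  then show ?thesis using assms(2) by simp
qed

lemma lin_comb_zvec: "set vs \<subseteq> zvec n \<Longrightarrow> lin_comb a vs \<in> zvec n"
  unfolding lin_comb_def zvec_def by (fastforce dest: nth_mem intro!: sum.neutral)

lemma mult_mod_2_if: "(x::int) * y mod 2 = (if odd x then y else 0) mod 2"
proof (cases "odd x")
  case True
  then have "x * y mod 2 = (x mod 2 * y) mod 2" by (simp only: mod_mult_left_eq)
  then show ?thesis using True by (simp add: odd_iff_mod_2_eq_one)
qed simp

lemma lin_comb_mod_2:
  "lin_comb a vs j mod 2 = (\<Sum>k | k < length vs \<and> odd (a k). (vs ! k) j) mod 2"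
proof -
  have "lin_comb a vs j mod 2 = (\<Sum>k<length vs. a k * (vs ! k) j mod 2) mod 2"
    unfolding lin_comb_def by (rule mod_sum_eq[symmetric])
  also have "\<dots> = (\<Sum>k<length vs. (if odd (a k) then (vs ! k) j else 0) mod 2) mod 2"
    by (intro arg_cong2[where f="(mod)"] sum.cong refl mult_mod_2_if)
  also have "\<dots> = (\<Sum>k<length vs. if odd (a k) then (vs ! k) j else 0) mod 2"
    by (rule mod_sum_eq)
  also have "(\<Sum>k<length vs. if odd (a k) then (vs ! k) j else 0) = (\<Sum>k | k < length vs \<and> odd (a k). (vs ! k) j)"
    by (simp add: sum.inter_filter[symmetric])
  finally show ?thesis .
qed

lemma int_span_add:
  assumes "x \<in> int_span vs" "y \<in> int_span vs"
  shows "(\<lambda>j. x j + y j) \<in> int_span vs"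
proof -
  obtain a a' where "x = lin_comb a vs" "y = lin_comb a' vs"
    using assms by (auto simp: int_span_def)
  then have "(\<lambda>j. x j + y j) = lin_comb (\<lambda>k. a k + a' k) vs"
    by (simp add: lin_comb_def distrib_right sum.distrib)
  then show ?thesis by (simp add: int_span_def)
qed

lemma int_span_scale:
  assumes "x \<in> int_span vs"
  shows "(\<lambda>j. c * x j) \<in> int_span vs"
proof -
  obtain a where "x = lin_comb a vs" using assms by (auto simp: int_span_def)
  then have "(\<lambda>j. c * x j) = lin_comb (\<lambda>k. c * a k) vs"
    by (simp add: lin_comb_def sum_distrib_left mult.assoc)
  then show ?thesis by (simp add: int_span_def)
qed

lemma int_span_sum:
  assumes "finite K" "\<forall>q\<in>K. f q \<in> int_span vs"
  shows "(\<lambda>j. \<Sum>q\<in>K. c q * f q j) \<in> int_span vs"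
  using assms
proof (induction K rule: finite_induct)
  case empty
  have "(\<lambda>_. 0) = lin_comb (\<lambda>_. 0) vs" by (simp add: lin_comb_def)
  then show ?case by (simp add: int_span_def)
next
  case (insert q K)
  then show ?case by (simp add: int_span_add int_span_scale)
qed

lemma int_span_mem:
  assumes "v \<in> set vs"
  shows "v \<in> int_span vs"
proof -
  obtain i where i: "i < length vs" "v = vs ! i" using assms by (auto simp: in_set_conv_nth)
  have "v = lin_comb (\<lambda>k. of_bool (k = i)) vs"
    unfolding lin_comb_def using i by simp
  then show ?thesis by (simp add: int_span_def)
qed

lemma double_unit_in_int_span_by_pivot:
  assumes v: "v \<in> int_span vs" "v \<in> zvec n" "v q = 1"
    and others: "\<forall>q'<n. q' \<noteq> q \<longrightarrow> v q' \<noteq> 0 \<longrightarrow> double_unit q' \<in> int_span vs"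
  shows "double_unit q \<in> int_span vs"
proof -
  define K where "K = {q'. q' < n \<and> q' \<noteq> q \<and> v q' \<noteq> 0}"
  have "finite K" by (simp add: K_def)
  then have "(\<lambda>j. \<Sum>q'\<in>K. (- v q') * double_unit q' j) \<in> int_span vs"
    using others by (intro int_span_sum) (auto simp: K_def)
  then have "(\<lambda>j. 2 * v j + (\<Sum>q'\<in>K. (- v q') * double_unit q' j)) \<in> int_span vs"
    using v(1) by (intro int_span_add int_span_scale)
  moreover have "2 * v j + (\<Sum>q'\<in>K. (- v q') * double_unit q' j) = double_unit q j" for j
  proof -
    have "(\<Sum>q'\<in>K. (- v q') * double_unit q' j) = (if j \<in> K then - 2 * v j else 0)"
      using \<open>finite K\<close> by (simp add: double_unit_def if_distrib sum.delta cong: if_cong)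
    then show ?thesis
      using v(2,3) by (auto simp: K_def double_unit_def zvec_def)
  qed
  ultimately show ?thesis by simp
qed

lemma even_in_int_span:
  assumes doubles: "\<forall>q<n. double_unit q \<in> int_span vs"
    and y: "y \<in> zvec n" "\<forall>j. even (y j)"
  shows "y \<in> int_span vs"
proof -
  have "(\<lambda>j. \<Sum>q\<in>{..<n}. (y q div 2) * double_unit q j) \<in> int_span vs"
    using doubles by (intro int_span_sum) auto
  moreover have "(\<Sum>q\<in>{..<n}. (y q div 2) * double_unit q j) = y j" for j
    using y by (simp add: double_unit_def if_distrib sum.delta zvec_def cong: if_cong)
  ultimately show ?thesis by simp
qed

lemma eq_0_if_dvd_all_powers_2:
  fixes x :: int
  assumes "\<forall>N. 2 ^ N dvd x"
  shows "x = 0"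
proof (rule ccontr)
  assume "x \<noteq> 0"
  then have "2 ^ nat \<bar>x\<bar> \<le> \<bar>x\<bar>"
    using assms dvd_imp_le_int by (metis abs_of_nonneg zero_le_numeral zero_le_power)
  moreover have "int (nat \<bar>x\<bar>) < 2 ^ nat \<bar>x\<bar>"
    using less_exp[of "nat \<bar>x\<bar>"] by (metis of_nat_less_iff of_nat_numeral of_nat_power)
  ultimately show False by simp
qed

lemma int_independent_if_relations_even:
  assumes even_rel: "\<forall>a. lin_comb a vs = (\<lambda>_. 0) \<longrightarrow> (\<forall>k<length vs. even (a k))"
  shows "int_independent vs"
proof -
  have "\<forall>a. lin_comb a vs = (\<lambda>_. 0) \<longrightarrow> (\<forall>k<length vs. 2 ^ N dvd a k)" for N
  proof (induction N)
    case (Suc N)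
    show ?case
    proof (intro allI impI)
      fix a k assume rel: "lin_comb a vs = (\<lambda>_. 0)" and k: "k < length vs"
      have ev: "\<forall>k<length vs. a k = 2 * (a k div 2)" using even_rel rel by auto
      have "lin_comb a vs j = 2 * lin_comb (\<lambda>k. a k div 2) vs j" for j
        unfolding lin_comb_def sum_distrib_left using ev by (intro sum.cong) (auto simp: mult.assoc)
      then have "lin_comb (\<lambda>k. a k div 2) vs = (\<lambda>_. 0)" using rel by (simp add: fun_eq_iff)
      then have "2 ^ N dvd a k div 2" using Suc.IH k by blast
      then show "2 ^ Suc N dvd a k" using ev k by (metis mult_dvd_mono dvd_refl power_Suc)
    qed
  qed simp
  then show ?thesis unfolding int_independent_def by (blast intro: eq_0_if_dvd_all_powers_2)
qed

lemma int_independent_scale: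
  assumes indep: "int_independent vs" and len: "length us = length vs"
    and scale: "\<forall>k<length vs. us ! k = (\<lambda>j. c k * (vs ! k) j)" "\<forall>k<length vs. c k \<noteq> 0"
  shows "int_independent us"
  unfolding int_independent_def
proof (intro allI impI)
  fix a k assume rel: "lin_comb a us = (\<lambda>_. 0)" and k: "k < length us"
  have "lin_comb a us = lin_comb (\<lambda>k. a k * c k) vs"
    unfolding lin_comb_def len using scale by (auto intro!: sum.cong simp: mult.assoc)
  then have "lin_comb (\<lambda>k. a k * c k) vs = (\<lambda>_. 0)" using rel by simp
  then have "a k * c k = 0"
    using indep[unfolded int_independent_def, rule_format, of "\<lambda>k. a k * c k"] k len by simp
  then show "a k = 0" using scale k len by simp
qed

section \<open>Construction A lattices\<close>

lemma double_unit_zvec: "q < n \<Longrightarrow> double_unit q \<in> zvec n"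
  by (simp add: double_unit_def zvec_def)

lemma int_span_zvec: "set vs \<subseteq> zvec n \<Longrightarrow> int_span vs \<subseteq> zvec n"
  by (auto simp: int_span_def lin_comb_zvec)

lemma constrA_eq_int_span:
  assumes basis: "f2_basis vs C" and vs: "set vs \<subseteq> zvec n" and ps: "set ps \<subseteq> {..<n}"
    and doubles: "\<forall>q<n. double_unit q \<in> int_span (vs @ map double_unit ps)"
  shows "constrA C n = int_span (vs @ map double_unit ps)"
proof
  let ?W = "vs @ map double_unit ps"
  have W_zvec: "set ?W \<subseteq> zvec n" using vs ps by (auto intro: double_unit_zvec)
  show "constrA C n \<subseteq> int_span ?W"
  proof
    fix x assume "x \<in> constrA C n"
    then have x: "x \<in> zvec n" "(\<lambda>i. x i mod 2) \<in> C" by (auto simp: constrA_def)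
    then obtain T where T: "T \<subseteq> {..<length vs}" "(\<lambda>i. x i mod 2) = (\<lambda>j. (\<Sum>k\<in>T. (vs ! k) j) mod 2)"
      using basis unfolding f2_basis_def by blast
    define u where "u = (\<lambda>j. \<Sum>k\<in>T. (vs ! k) j)"
    have "\<forall>k\<in>T. vs ! k \<in> int_span ?W" using T(1) by (auto intro!: int_span_mem)
    from int_span_sum[OF finite_subset[OF T(1)] this, of "\<lambda>_. 1"]
    have u: "u \<in> int_span ?W" by (simp add: u_def)
    have "(\<lambda>j. x j - u j) \<in> int_span ?W"
    proof (rule even_in_int_span[OF doubles])
      show "(\<lambda>j. x j - u j) \<in> zvec n" using x(1) u int_span_zvec[OF W_zvec] by (auto simp: zvec_def)
      have "x j mod 2 = u j mod 2" for j using fun_cong[OF T(2), of j] by (simp add: u_def)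
      then show "\<forall>j. even (x j - u j)" by (simp add: mod_eq_dvd_iff)
    qed
    from int_span_add[OF u this] show "x \<in> int_span ?W" by simp
  qed
  show "int_span ?W \<subseteq> constrA C n"
  proof
    fix x assume "x \<in> int_span ?W"
    then obtain a where x: "x = lin_comb a ?W" by (auto simp: int_span_def)
    have "x j mod 2 = (\<Sum>k | k < length vs \<and> odd (a k). (vs ! k) j) mod 2" for j
      unfolding x lin_comb_append lin_comb_map_double_unit lin_comb_mod_2[symmetric] by simp
    then have "(\<lambda>j. x j mod 2) = (\<lambda>j. (\<Sum>k | k < length vs \<and> odd (a k). (vs ! k) j) mod 2)" by simp
    moreover have "{k. k < length vs \<and> odd (a k)} \<subseteq> {..<length vs}" by auto
    ultimately have "(\<lambda>j. x j mod 2) \<in> C" using basis unfolding f2_basis_def by blast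
    moreover have "x \<in> zvec n" using x W_zvec by (simp add: lin_comb_zvec)
    ultimately show "x \<in> constrA C n" by (simp add: constrA_def)
  qed
qed

lemma relations_even_code_with_unit_vecs:
  assumes basis: "f2_basis vs C" and ps: "distinct ps"
    and support: "\<forall>y\<in>C. (\<forall>j. j \<notin> set ps \<longrightarrow> y j = 0) \<longrightarrow> y = (\<lambda>_. 0)"
    and rel: "lin_comb a (vs @ map unit_vec ps) = (\<lambda>_. 0)"
  shows "\<forall>k<length (vs @ map unit_vec ps). even (a k)"
proof -
  let ?m = "length vs"
  have rel_j: "lin_comb a vs j + lin_comb (\<lambda>k. a (?m + k)) (map unit_vec ps) j = 0" for j
    using fun_cong[OF rel, of j] by (simp add: lin_comb_append)
  define T where "T = {k. k < ?m \<and> odd (a k)}"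
  define y where "y = (\<lambda>j. (\<Sum>k\<in>T. (vs ! k) j) mod 2)"
  have "T \<subseteq> {..<?m}" by (auto simp: T_def)
  then have "y \<in> C" using basis unfolding f2_basis_def y_def by blast
  moreover have "y j = 0" if "j \<notin> set ps" for j
    using rel_j[of j] lin_comb_map_unit_vec_outside[OF that] lin_comb_mod_2[of a vs j]
    by (simp add: y_def T_def)
  ultimately have "y = (\<lambda>_. 0)" using support by blast
  then have "T = {}" using basis \<open>T \<subseteq> {..<?m}\<close> unfolding f2_basis_def y_def by blast
  then have even_vs: "\<forall>k<?m. even (a k)" by (auto simp: T_def)
  have even_ps: "even (a (?m + k))" if "k < length ps" for k
  proof -
    have "even (lin_comb a vs (ps ! k))"
      unfolding lin_comb_def using even_vs by (auto intro!: dvd_sum)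
    then show ?thesis
      using rel_j[of "ps ! k"] lin_comb_map_unit_vec_nth[OF ps that] by (metis dvd_add_right_iff dvd_0_right)
  qed
  show ?thesis
  proof (intro allI impI)
    fix k assume "k < length (vs @ map unit_vec ps)"
    then show "even (a k)"
      using even_vs even_ps[of "k - ?m"] by (cases "k < ?m") auto
  qed
qed

lemma int_independent_code_with_double_units:
  assumes basis: "f2_basis vs C" and ps: "distinct ps"
    and support: "\<forall>y\<in>C. (\<forall>j. j \<notin> set ps \<longrightarrow> y j = 0) \<longrightarrow> y = (\<lambda>_. 0)"
  shows "int_independent (vs @ map double_unit ps)"
proof (rule int_independent_scale)
  show "int_independent (vs @ map unit_vec ps)"
    using relations_even_code_with_unit_vecs[OF basis ps support]
    by (intro int_independent_if_relations_even) blast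
  show "\<forall>k<length (vs @ map unit_vec ps).
      (vs @ map double_unit ps) ! k = (\<lambda>j. (if k < length vs then 1 else 2) * ((vs @ map unit_vec ps) ! k) j)"
    by (auto simp: nth_append double_unit_def unit_vec_def)
qed auto

lemma z_basis_code_with_double_units:
  assumes basis: "f2_basis vs C" and vs: "set vs \<subseteq> zvec n"
    and ps: "distinct ps" "set ps \<subseteq> {..<n}"
    and support: "\<forall>y\<in>C. (\<forall>j. j \<notin> set ps \<longrightarrow> y j = 0) \<longrightarrow> y = (\<lambda>_. 0)"
    and doubles: "\<forall>q<n. double_unit q \<in> int_span (vs @ map double_unit ps)"
  shows "z_basis (vs @ map double_unit ps) (constrA C n)"
  using constrA_eq_int_span[OF basis vs ps(2) doubles] int_independent_code_with_double_units[OF basis ps(1) support]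
  by (simp add: z_basis_iff)

lemma pc_code_eq_0_if_supported_on_indep_cols:
  assumes indep: "f2_indep_cols H m P" and y: "y \<in> pc_code H m n"
    and supp: "\<forall>j. j \<notin> P \<longrightarrow> y j = 0"
  shows "y = (\<lambda>_. 0)"
proof -
  define S where "S = {j. j < n \<and> y j \<noteq> 0}"
  have y_bin: "y \<in> bvec n" and y_ker: "\<forall>i<m. (\<Sum>j<n. H i j * y j) mod 2 = 0"
    using y by (auto simp: pc_code_def)
  have "S = {}"
  proof (rule ccontr)
    assume "S \<noteq> {}"
    moreover have "S \<subseteq> P" using supp by (auto simp: S_def)
    ultimately obtain i where i: "i < m" "(\<Sum>j\<in>S. H i j) mod 2 \<noteq> 0"
      using indep unfolding f2_indep_cols_def by blast
    have "(\<Sum>j<n. H i j * y j) = (\<Sum>j<n. if j \<in> S then H i j else 0)"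
      using y_bin by (intro sum.cong) (auto simp: S_def bvec_def)
    also have "\<dots> = (\<Sum>j\<in>S. H i j)"
      by (simp add: sum.If_cases S_def lessThan_def Collect_conj_eq Int_commute)
    finally show False using y_ker i by (metis (no_types, lifting))
  qed
  then show ?thesis using y_bin by (auto simp: S_def bvec_def zvec_def fun_eq_iff not_less)
qed

section \<open>The rows of the generator matrix\<close>

definition R_positions :: "nat \<Rightarrow> nat \<Rightarrow> nat \<Rightarrow> (nat \<Rightarrow> nat) \<Rightarrow> nat list" where
  "R_positions B b l d = concat (map (\<lambda>j. map (\<lambda>q. B + j * b + d j + q) [0..<b - d j]) [0..<l])"

lemma R_rows_eq_map_double_unit: "R_rows t b l d = map double_unit (R_positions ((t - l) * b) b l d)"
  by (simp add: R_rows_def R_positions_def map_concat R_row_def double_unit_def comp_def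
      del: map_add_upt)

lemma set_R_positions:
  assumes "\<forall>j<l. d j \<le> b"
  shows "set (R_positions B b l d) = {B + j * b + k | j k. j < l \<and> d j \<le> k \<and> k < b}"
proof (intro equalityI subsetI)
  fix x assume "x \<in> set (R_positions B b l d)"
  then obtain j q where "j < l" "q < b - d j" "x = B + j * b + d j + q"
    by (auto simp only: R_positions_def set_concat set_map set_upt image_iff UN_iff
        atLeastLessThan_iff Bex_def)
  then show "x \<in> {B + j * b + k | j k. j < l \<and> d j \<le> k \<and> k < b}" by force
next
  fix x assume "x \<in> {B + j * b + k | j k. j < l \<and> d j \<le> k \<and> k < b}"
  then obtain j k where "j < l" "d j \<le> k" "k < b" "x = B + j * b + d j + (k - d j)" by auto
  then show "x \<in> set (R_positions B b l d)"
    by (auto simp: R_positions_def simp del: map_add_upt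
        intro!: bexI[of _ j] image_eqI[of _ _ "k - d j"])
qed

lemma block_index_bound:
  assumes "j < l" "k < b"
  shows "j * b + k < l * (b :: nat)"
proof -
  have "Suc j * b \<le> l * b" using assms(1) by (intro mult_le_mono1) simp
  then show ?thesis using assms(2) by simp
qed

lemma distinct_R_positions:
  assumes "\<forall>j<l. d j \<le> b"
  shows "distinct (R_positions B b l d)"
  using assms
proof (induction l)
  case (Suc l)
  have "R_positions B b (Suc l) d = R_positions B b l d @ map (\<lambda>q. B + l * b + d l + q) [0..<b - d l]"
    by (simp add: R_positions_def)
  moreover have "\<forall>x\<in>set (R_positions B b l d). x < B + l * b"
    using Suc.prems block_index_bound by (force simp: set_R_positions)
  ultimately show ?case using Suc by (auto simp: distinct_map simp del: map_add_upt)
qed (simp add: R_positions_def)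

lemma length_generator_rows:
  assumes "l \<le> t" "\<forall>j<l. d j \<le> b"
  shows "length (G_rows G t b l @ Q_rows w t b l d @ R_rows t b l d) = t * b"
proof -
  have "length (Q_rows w t b l d @ R_rows t b l d) = (\<Sum>i<l. d i + (b - d i))"
    by (simp add: Q_rows_def R_rows_def length_concat comp_def interv_sum_list_conv_sum_set_nat
        atLeast0LessThan sum.distrib)
  also have "\<dots> = l * b" using assms(2) by simp
  finally show ?thesis using assms(1) by (simp add: G_rows_def diff_mult_distrib)
qed

lemma G_rows_Q_rows_zvec: "set (G_rows G t b l @ Q_rows w t b l d) \<subseteq> zvec (t * b)"
  by (auto simp: G_rows_def Q_rows_def mat_row_def zvec_def Q_row_def)

lemma block_decompose:
  fixes l t b q :: nat
  assumes "l \<le> t" "0 < b" "(t - l) * b \<le> q" "q < t * b"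
  shows "\<exists>j<l. \<exists>k<b. q = (t - l) * b + j * b + k"
proof -
  have "t * b = (t - l) * b + l * b" using assms(1) by (simp add: diff_mult_distrib)
  then have "(q - (t - l) * b) div b < l" using assms by (simp add: less_mult_imp_div_less)
  moreover have "q = (t - l) * b + (q - (t - l) * b) div b * b + (q - (t - l) * b) mod b"
    using assms(3) by simp
  ultimately show ?thesis using assms(2) by (meson mod_less_divisor)
qed

lemma Q_row_zvec: "Q_row w t b l i s \<in> zvec (t * b)"
  by (simp add: Q_row_def zvec_def)

lemma Q_row_eq_0_below: "col < (t - l) * b \<Longrightarrow> Q_row w t b l i s col = 0"
  by (simp add: Q_row_def)

lemma Q_row_block_entry:
  assumes "l \<le> t" "j < l" "k < b"
  shows "Q_row w t b l i s ((t - l) * b + j * b + k) = w i (j * b + (k + b - s mod b) mod b)"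
proof -
  have "t * b = (t - l) * b + l * b" using assms(1) by (simp add: diff_mult_distrib)
  then have "(t - l) * b + j * b + k < t * b" using block_index_bound[OF assms(2,3)] by simp
  then show ?thesis using assms(3) by (simp add: Q_row_def Let_def)
qed

text \<open>Induction on the offset \<open>k\<close> of \<open>q\<close> in its block \<open>j\<close>: row \<open>(j, k)\<close> of \<open>Q\<close> is \<open>1\<close> at \<open>q\<close>,
  and since \<open>w\<^sub>j\<close> shifted by \<open>k\<close> vanishes on the offsets \<open>k, \<dots>, k + d\<^sub>j\<^sub>' - 1\<close> of each block
  \<open>j'\<close>, its other nonzero entries lie in the columns of \<open>R\<close> or at smaller offsets.\<close>
lemma double_units_in_int_span_last_blocks:
  assumes lt: "l \<le> t" and b: "0 < b"
    and w_init: "\<forall>i<l. 1 \<le> d i \<longrightarrow> (\<forall>j<l. \<forall>k<d j.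
                  w i (j * b + k) = (if j = i \<and> k = 0 then 1 else 0))"
    and Q_in: "\<forall>i<l. \<forall>s<d i. Q_row w t b l i s \<in> int_span vs"
    and R_in: "\<forall>j<l. \<forall>k. d j \<le> k \<longrightarrow> k < b \<longrightarrow> double_unit ((t - l) * b + j * b + k) \<in> int_span vs"
  shows "\<forall>q. (t - l) * b \<le> q \<longrightarrow> q < t * b \<longrightarrow> double_unit q \<in> int_span vs"
proof -
  let ?B = "(t - l) * b"
  have "double_unit (?B + j * b + k) \<in> int_span vs" if "j < l" "k < b" for j k
    using that
  proof (induction k arbitrary: j rule: less_induct)
    case (less k j)
    show ?case
    proof (cases "d j \<le> k")
      case True
      then show ?thesis using R_in less.prems by blast
    next
      case False
      define v where "v = Q_row w t b l j k"
      have w_j: "\<forall>j'<l. \<forall>k'<d j'. w j (j' * b + k') = (if j' = j \<and> k' = 0 then 1 else 0)"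
        using w_init less.prems False by simp
      have "double_unit q' \<in> int_span vs"
        if q': "q' < t * b" "q' \<noteq> ?B + j * b + k" "v q' \<noteq> 0" for q'
      proof -
        have "?B \<le> q'" using q'(3) Q_row_eq_0_below[of q'] unfolding v_def by (meson not_le)
        then obtain j' k' where jk': "j' < l" "k' < b" "q' = ?B + j' * b + k'"
          using block_decompose[OF lt b _ q'(1)] by blast
        consider "k' < k" | "d j' \<le> k'" | "k \<le> k'" "k' < d j'" by linarith
        then show ?thesis
        proof cases
          case 1
          then show ?thesis using less.IH jk' by simp
        next
          case 2
          then show ?thesis using R_in jk' by blast
        next
          case 3
          have "(k' + b - k mod b) mod b = k' - k"
          proof -
            have "k' + b - k mod b = (k' - k) + b" using 3 less.prems(2) by simp
            then show ?thesis using jk'(2) by (simp add: less_imp_diff_less)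
          qed
          moreover have "v q' = w j (j' * b + (k' + b - k mod b) mod b)"
            unfolding v_def jk'(3) by (rule Q_row_block_entry[OF lt jk'(1,2)])
          ultimately have v_q': "v q' = w j (j' * b + (k' - k))" by simp
          have "k' - k < d j'" using 3 by linarith
          then have "w j (j' * b + (k' - k)) = (if j' = j \<and> k' - k = 0 then 1 else 0)"
            using w_j jk'(1) by blast
          then have "v q' = (if j' = j \<and> k' = k then 1 else 0)" using v_q' 3 by auto
          moreover have "\<not> (j' = j \<and> k' = k)" using q'(2) jk'(3) by auto
          ultimately show ?thesis using q'(3) by simp
        qed
      qed
      moreover have "v (?B + j * b + k) = 1"
      proof -
        have "0 < d j" using False by linarith
        then have "w j (j * b + 0) = 1" using w_j[rule_format, OF less.prems(1), of 0] by simp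
        then show ?thesis using less.prems by (simp add: v_def Q_row_block_entry lt)
      qed
      moreover have "v \<in> int_span vs" using Q_in less.prems False by (simp add: v_def)
      ultimately show ?thesis
        using Q_row_zvec by (intro double_unit_in_int_span_by_pivot[of v vs "t * b"]) (auto simp: v_def)
    qed
  qed
  then show ?thesis using block_decompose[OF lt b] by blast
qed

lemma double_units_in_int_span_first_blocks:
  assumes G_id: "\<forall>i<B. \<forall>j<B. G i j = (if i = j then 1 else 0)"
    and G_in: "\<forall>i<B. mat_row G n i \<in> int_span vs"
    and tail: "\<forall>q. B \<le> q \<longrightarrow> q < n \<longrightarrow> double_unit q \<in> int_span vs"
  shows "\<forall>q<n. double_unit q \<in> int_span vs"
proof (intro allI impI)
  fix q assume "q < n"
  show "double_unit q \<in> int_span vs"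
  proof (cases "B \<le> q")
    case False
    have "mat_row G n i \<in> zvec n" for i by (simp add: mat_row_def zvec_def)
    moreover have "double_unit q' \<in> int_span vs"
      if "q' < n" "q' \<noteq> q" "mat_row G n q q' \<noteq> 0" for q'
      using that False G_id tail by (cases "B \<le> q'") (auto simp: mat_row_def)
    ultimately show ?thesis
      using False G_id G_in \<open>q < n\<close>
      by (intro double_unit_in_int_span_by_pivot[of "mat_row G n q" vs n]) (auto simp: mat_row_def)
  qed (use tail \<open>q < n\<close> in blast)
qed

theorem theorem1:
  fixes b c t n r l :: nat
    and H G w :: "nat \<Rightarrow> nat \<Rightarrow> int"
    and d :: "nat \<Rightarrow> nat"
  assumes pos: "0 < b" "0 < c" "0 < t"
    and n_def: "n = t * b"
    and H_bin: "\<forall>i<c * b. \<forall>j<t * b. H i j \<in> {0, 1}"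
    and H_circ: "block_circulant H b 0 0 c t"
    and H_rank: "r = f2_rank_cols H (c * b) {..<t * b}"
    and l_range: "c \<le> l" "l \<le> t"
    and l_least: "\<forall>S\<subseteq>{..<t}. card S < l \<longrightarrow> f2_rank_cols H (c * b) (block_cols b S) < r"
    and D_rank: "f2_rank_cols H (c * b) (block_cols b {t - l..<t}) = r"
    and d_le: "\<forall>j<l. d j \<le> b"
    and P_indep: "f2_indep_cols H (c * b)
                    {(t - l) * b + j * b + k | j k. j < l \<and> d j \<le> k \<and> k < b}"
    and P_card: "card {(t - l) * b + j * b + k | j k. j < l \<and> d j \<le> k \<and> k < b} = r"
    and w_bin: "\<forall>i<l. 1 \<le> d i \<longrightarrow> w i \<in> bvec (l * b)"
    and w_ker: "\<forall>i<l. 1 \<le> d i \<longrightarrow>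
                  (\<forall>u<c * b. (\<Sum>p<l * b. H u ((t - l) * b + p) * w i p) mod 2 = 0)"
    and w_init: "\<forall>i<l. 1 \<le> d i \<longrightarrow> (\<forall>j<l. \<forall>k<d j.
                  w i (j * b + k) = (if j = i \<and> k = 0 then 1 else 0))"
    and G_id: "\<forall>i<(t - l) * b. \<forall>j<(t - l) * b. G i j = (if i = j then 1 else 0)"
    and G_bin: "\<forall>i<(t - l) * b. \<forall>j<t * b. G i j \<in> {0, 1}"
    and G_circ: "block_circulant G b 0 ((t - l) * b) (t - l) l"
    and Gqc_basis: "f2_basis (G_rows G t b l @ Q_rows w t b l d) (pc_code H (c * b) n)"
  shows "length (G_rows G t b l @ Q_rows w t b l d @ R_rows t b l d) = n \<and>
         z_basis (G_rows G t b l @ Q_rows w t b l d @ R_rows t b l d)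
                 (constrA (pc_code H (c * b) n) n)"
proof -
  let ?B = "(t - l) * b"
  define vs where "vs = G_rows G t b l @ Q_rows w t b l d"
  define ps where "ps = R_positions ?B b l d"
  let ?W = "vs @ map double_unit ps"
  have n_split: "n = ?B + l * b" using l_range(2) by (simp add: n_def diff_mult_distrib)
  have R_rows: "R_rows t b l d = map double_unit ps" by (simp add: ps_def R_rows_eq_map_double_unit)
  have set_ps: "set ps = {?B + j * b + k | j k. j < l \<and> d j \<le> k \<and> k < b}"
    using d_le by (simp add: ps_def set_R_positions)
  have ps_lt: "set ps \<subseteq> {..<n}" using block_index_bound n_split by (force simp: set_ps)
  have support: "\<forall>y\<in>pc_code H (c * b) n. (\<forall>j. j \<notin> set ps \<longrightarrow> y j = 0) \<longrightarrow> y = (\<lambda>_. 0)"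
    using pc_code_eq_0_if_supported_on_indep_cols[OF P_indep] by (simp add: set_ps)
  have tail: "\<forall>q. ?B \<le> q \<longrightarrow> q < t * b \<longrightarrow> double_unit q \<in> int_span ?W"
  proof (rule double_units_in_int_span_last_blocks[OF l_range(2) pos(1) w_init])
    show "\<forall>i<l. \<forall>s<d i. Q_row w t b l i s \<in> int_span ?W"
      by (intro allI impI int_span_mem) (force simp: vs_def Q_rows_def)
    show "\<forall>j<l. \<forall>k. d j \<le> k \<longrightarrow> k < b \<longrightarrow> double_unit (?B + j * b + k) \<in> int_span ?W"
      using set_ps by (intro allI impI int_span_mem) force
  qed
  have doubles: "\<forall>q<n. double_unit q \<in> int_span ?W"
    unfolding n_def using tail
    by (intro double_units_in_int_span_first_blocks[OF G_id])
      (auto simp: vs_def G_rows_def intro!: int_span_mem)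
  have "z_basis ?W (constrA (pc_code H (c * b) n) n)"
    using Gqc_basis[folded vs_def] G_rows_Q_rows_zvec distinct_R_positions[OF d_le] ps_lt
      support doubles by (intro z_basis_code_with_double_units) (simp_all add: vs_def ps_def n_def)
  then show ?thesis using length_generator_rows[OF l_range(2) d_le] R_rows by (simp add: vs_def n_def)
qed

end
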